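(* Let $M$ be a module over a ring. For all $X,A,B\subseteq M$, $$X\oplus(A\cap B)=\bigcap_{Y\subseteq X}\Big((Y\oplus A)\cup\big((X\setminus Y)\oplus B\big)\Big).$$
   Context: For $A,B\subseteq M$, the Minkowski addition is $A\oplus B=\{a+b : a\in A, b\in B\}$. *)

theory Defs
  imports Main "HOL-Library.Set_Algebras"
begin

end

theory Submission
  imports Defs
begin

text \<open>For the inclusion from right to left, given \<open>z\<close> in the intersection, choose \<open>Y\<close> to be the set of those \<open>x \<in> X\<close> with
  \<open>-x + z \<notin> A\<close>. Then \<open>z \<notin> Y + A\<close>, so \<open>z = x + b\<close> with \<open>x \<in> X - Y\<close> and \<open>b \<in> B\<close>, and
  \<open>x \<notin> Y\<close> says exactly that \<open>b = -x + z \<in> A\<close>.\<close>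

lemma set_plus_Int_subset_Un_Diff:
  fixes X Y A B :: "'a::plus set"
  shows "X + (A \<inter> B) \<subseteq> (Y + A) \<union> ((X - Y) + B)"
proof
  fix z assume "z \<in> X + (A \<inter> B)"
  then obtain x c where "x \<in> X" "c \<in> A" "c \<in> B" "z = x + c"
    by (auto elim: set_plus_elim)
  then show "z \<in> (Y + A) \<union> ((X - Y) + B)"
    by (cases "x \<in> Y") (auto intro: set_plus_intro)
qed

lemma Inter_Pow_Un_Diff_subset_set_plus_Int:
  fixes X A B :: "'a::group_add set"
  shows "(\<Inter>Y\<in>Pow X. (Y + A) \<union> ((X - Y) + B)) \<subseteq> X + (A \<inter> B)"
proof
  fix z assume z: "z \<in> (\<Inter>Y\<in>Pow X. (Y + A) \<union> ((X - Y) + B))"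
  define Y where "Y = {x \<in> X. - x + z \<notin> A}"
  have "z \<notin> Y + A"
  proof
    assume "z \<in> Y + A"
    then obtain y a where "y \<in> Y" "a \<in> A" "z = y + a"
      by (auto elim: set_plus_elim)
    then show False
      by (simp add: Y_def add.assoc[symmetric])
  qed
  moreover have "Y \<in> Pow X"
    by (auto simp: Y_def)
  ultimately have "z \<in> (X - Y) + B"
    using z by blast
  then obtain x b where "x \<in> X" "x \<notin> Y" "b \<in> B" "z = x + b"
    by (auto elim: set_plus_elim)
  moreover from \<open>x \<in> X\<close> \<open>x \<notin> Y\<close> \<open>z = x + b\<close> have "b \<in> A"
    by (simp add: Y_def add.assoc[symmetric])
  ultimately show "z \<in> X + (A \<inter> B)"
    by (auto intro: set_plus_intro)
qed

theorem mainTheorem16: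
  fixes X A B :: "'m::ab_group_add set"
  shows "X + (A \<inter> B) = (\<Inter>Y\<in>Pow X. (Y + A) \<union> ((X - Y) + B))"
proof (rule antisym)
  show "X + (A \<inter> B) \<subseteq> (\<Inter>Y\<in>Pow X. (Y + A) \<union> ((X - Y) + B))"
    using set_plus_Int_subset_Un_Diff by (rule INT_greatest)
qed (rule Inter_Pow_Un_Diff_subset_set_plus_Int)

end
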